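(* Let $z_1,\dots,z_m$ be distinct points of $\partial\mathbb{D}$, let $\mu=\sum_{j=1}^m\mu_j\delta_{z_j}$ with $\mu_j>0$, $\sum_j\mu_j=1$, and let $G$ be a real-valued function on $\{z_1,\dots,z_m\}$, with the points numbered so that $G(z_1)\geq G(z_2)\geq\cdots\geq G(z_m)$. Let $K_1,\dots,K_L$ be the $K$-groups, $K_i=\{k_{i-1}+1,\dots,k_i\}$ ($k_0=0$, $k_L=m$), i.e. the maximal blocks of consecutive indices on which $G(z_\cdot)$ is constant, so $G(z_{k_i})>G(z_{k_i+1})$. For $t\ge0$ put $\Sigma_t(\mu)=e^{tG}\mu/\int e^{tG}d\mu$. For each $i$ put $z^{(K_i)}=\prod_{p=1}^{k_{i-1}}z_p$ and let $\mu^{(K_i)}=\sum_{\ell\in K_i}\mu^{(K_i)}_\ell\delta_{z_\ell}$ with \[ \mu^{(K_i)}_\ell=\frac{\bigl[\prod_{p=1}^{k_{i-1}}|z_\ell-z_p|^2\bigr]\mu_\ell}{\sum_{r\in K_i}\bigl[\prod_{p=1}^{k_{i-1}}|z_r-z_p|^2\bigr]\mu_r}. \] Then for every $i$ and every $\ell\in K_i$, \[ \lim_{t\to\infty}\alpha_{\ell-1}(\Sigma_t(\mu))=(-1)^{k_{i-1}}\,\overline{z^{(K_i)}}\;\alpha_{\ell-k_{i-1}-1}(\mu^{(K_i)}). \]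
   Context: For a positive finite measure $\nu$ on $\partial\mathbb{D}=\{|z|=1\}$ whose support has at least $n$ points, $\Phi_n(z;\nu)$ denotes the monic orthogonal polynomial of degree $n$ (the unique monic degree-$n$ polynomial orthogonal in $L^2(\nu)$ to all polynomials of lower degree). The Verblunsky coefficients are $\alpha_n(\nu)=-\overline{\Phi_{n+1}(0;\nu)}$ for $n+1\le\#\mathrm{supp}\,\nu$; equivalently $\Phi_{n+1}(z)=z\Phi_n(z)-\overline{\alpha_n}\Phi_n^*(z)$ with $\Phi_n^*(z)=z^n\overline{\Phi_n(1/\bar z)}$. An empty product equals $1$. *)

theory Defs
  imports Complex_Main "HOL-Computational_Algebra.Polynomial"
begin

text \<open>A finitely supported positive measure on the unit circle is represented by its
  (finite) support S and its weight function w (w x = mass of the atom at x).\<close>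
definition l2ip :: "complex set \<Rightarrow> (complex \<Rightarrow> real) \<Rightarrow> complex poly \<Rightarrow> complex poly \<Rightarrow> complex" where
  "l2ip S w p q = (\<Sum>x\<in>S. complex_of_real (w x) * poly p x * cnj (poly q x))"

definition monicOP :: "complex set \<Rightarrow> (complex \<Rightarrow> real) \<Rightarrow> nat \<Rightarrow> complex poly" where
  "monicOP S w n = (THE p. degree p = n \<and> lead_coeff p = 1 \<and>
      (\<forall>q. degree q < n \<longrightarrow> l2ip S w p q = 0))"

definition verblunsky :: "complex set \<Rightarrow> (complex \<Rightarrow> real) \<Rightarrow> nat \<Rightarrow> complex" where
  "verblunsky S w n = - cnj (poly (monicOP S w (Suc n)) 0)"

definition dmeas_w :: "(nat \<Rightarrow> complex) \<Rightarrow> (nat \<Rightarrow> real) \<Rightarrow> nat set \<Rightarrow> complex \<Rightarrow> real" where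
  "dmeas_w z c J = (\<lambda>x. \<Sum>j\<in>{j\<in>J. z j = x}. c j)"

definition verb_disc :: "(nat \<Rightarrow> complex) \<Rightarrow> (nat \<Rightarrow> real) \<Rightarrow> nat set \<Rightarrow> nat \<Rightarrow> complex" where
  "verb_disc z c J n = verblunsky (z ` J) (dmeas_w z c J) n"

definition is_K_group :: "(complex \<Rightarrow> real) \<Rightarrow> (nat \<Rightarrow> complex) \<Rightarrow> nat \<Rightarrow> nat \<Rightarrow> nat \<Rightarrow> bool" where
  "is_K_group G z m a b \<longleftrightarrow> a < b \<and> b \<le> m \<and>
     (\<forall>j\<in>{a+1..b}. G (z j) = G (z (a+1))) \<and>
     (a = 0 \<or> G (z a) \<noteq> G (z (a+1))) \<and>
     (b = m \<or> G (z b) \<noteq> G (z (b+1)))"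

definition sigma_w :: "(complex \<Rightarrow> real) \<Rightarrow> (nat \<Rightarrow> complex) \<Rightarrow> (nat \<Rightarrow> real) \<Rightarrow> nat \<Rightarrow> real \<Rightarrow> nat \<Rightarrow> real" where
  "sigma_w G z \<mu> m t j = \<mu> j * exp (t * G (z j)) / (\<Sum>r\<in>{1..m}. \<mu> r * exp (t * G (z r)))"

definition muK_w :: "(nat \<Rightarrow> complex) \<Rightarrow> (nat \<Rightarrow> real) \<Rightarrow> nat \<Rightarrow> nat \<Rightarrow> nat \<Rightarrow> real" where
  "muK_w z \<mu> a b l = (\<Prod>p\<in>{1..a}. (cmod (z l - z p))^2) * \<mu> l /
      (\<Sum>r\<in>{a+1..b}. (\<Prod>p\<in>{1..a}. (cmod (z r - z p))^2) * \<mu> r)"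

end

theory Submission
  imports Defs
begin

(* Heine's formula for a measure with atoms z_j (j in J) of masses w_j: the monic orthogonal
   polynomial of degree n is the average of prod_{j in S} (z - z_j) over the n-element subsets S of J,
   weighted by (prod_{j in S} w_j) |Vandermonde(z_S)|^2.  So alpha_{n-1} is minus the conjugate of
   the weighted mean of prod_{j in S} (-z_j) over the n-subsets.

   Tilting by e^{tG} multiplies the weight of S by exp (t * sum_{j in S} G(z_j)), the normalisation
   cancelling, so as t -> oo the mean concentrates on the l-subsets maximising sum_S G.  For l in the
   K-group {a+1..b} these are exactly the sets {1..a} u T with T an (l-a)-subset of {a+1..b}, and
   their weights are one common constant times the Heine weights of mu^(K) on T.  Hence the limit is
   prod_{p <= a} (-z_p) times the mean for mu^(K), which gives alpha_{l-a-1}(mu^(K)). *)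

definition subsets_of_card :: "'a set \<Rightarrow> nat \<Rightarrow> 'a set set" where
  "subsets_of_card J n = {S. S \<subseteq> J \<and> card S = n}"

definition vandermonde_sq :: "('a \<Rightarrow> complex) \<Rightarrow> 'a set \<Rightarrow> real" where
  "vandermonde_sq z S = (\<Prod>i\<in>S. \<Prod>j\<in>S - {i}. cmod (z i - z j))"

definition heine_weight :: "('a \<Rightarrow> complex) \<Rightarrow> ('a \<Rightarrow> real) \<Rightarrow> 'a set \<Rightarrow> real" where
  "heine_weight z w S = (\<Prod>j\<in>S. w j) * vandermonde_sq z S"

definition heine_poly :: "('a \<Rightarrow> complex) \<Rightarrow> ('a \<Rightarrow> real) \<Rightarrow> 'a set \<Rightarrow> nat \<Rightarrow> complex poly" where
  "heine_poly z w J n =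
     smult (1 / complex_of_real (\<Sum>S\<in>subsets_of_card J n. heine_weight z w S))
       (\<Sum>S\<in>subsets_of_card J n. smult (complex_of_real (heine_weight z w S)) (\<Prod>j\<in>S. [:- z j, 1:]))"

definition heine_mean :: "('a \<Rightarrow> complex) \<Rightarrow> ('a \<Rightarrow> real) \<Rightarrow> 'a set set \<Rightarrow> complex" where
  "heine_mean z w F =
     (\<Sum>S\<in>F. complex_of_real (heine_weight z w S) * (\<Prod>j\<in>S. - z j)) /
     complex_of_real (\<Sum>S\<in>F. heine_weight z w S)"

lemma finite_subsets_of_card [simp]: "finite J \<Longrightarrow> finite (subsets_of_card J n)"
  unfolding subsets_of_card_def by (rule finite_subset[of _ "Pow J"]) auto

lemma subsets_of_card_nonempty:
  assumes "finite J" "n \<le> card J"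
  shows "subsets_of_card J n \<noteq> {}"
  using obtain_subset_with_card_n[OF assms(2)] unfolding subsets_of_card_def by blast

lemma sum_subsets_of_card_Suc:
  fixes f :: "'a set \<Rightarrow> 'a \<Rightarrow> 'b :: comm_monoid_add"
  assumes "finite J"
  shows "(\<Sum>S\<in>subsets_of_card J n. \<Sum>x\<in>J - S. f S x) =
         (\<Sum>T\<in>subsets_of_card J (Suc n). \<Sum>x\<in>T. f (T - {x}) x)"
proof -
  have fin: "S \<in> subsets_of_card J k \<Longrightarrow> finite S" for S k
    using assms by (auto simp: subsets_of_card_def intro: finite_subset)
  have "(\<Sum>S\<in>subsets_of_card J n. \<Sum>x\<in>J - S. f S x) =
        (\<Sum>(S, x)\<in>Sigma (subsets_of_card J n) (\<lambda>S. J - S). f S x)"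
    using assms by (intro sum.Sigma) auto
  also have "\<dots> = (\<Sum>(T, x)\<in>Sigma (subsets_of_card J (Suc n)) (\<lambda>T. T). f (T - {x}) x)"
    by (rule sum.reindex_bij_witness[where i = "\<lambda>(T, x). (T - {x}, x)" and j = "\<lambda>(S, x). (insert x S, x)"])
       (auto simp: subsets_of_card_def card_insert_if dest: fin finite_subset[OF _ assms])
  also have "\<dots> = (\<Sum>T\<in>subsets_of_card J (Suc n). \<Sum>x\<in>T. f (T - {x}) x)"
    using assms by (intro sum.Sigma[symmetric]) (auto dest: fin)
  finally show ?thesis .
qed

lemma sum_subsets_between:
  fixes f :: "'a set \<Rightarrow> 'b :: comm_monoid_add"
  assumes "finite A" "finite K" "A \<inter> K = {}" "A \<union> K \<subseteq> J" "card A \<le> l"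
  shows "(\<Sum>S\<in>{S\<in>subsets_of_card J l. A \<subseteq> S \<and> S \<subseteq> A \<union> K}. f S) =
         (\<Sum>T\<in>subsets_of_card K (l - card A). f (A \<union> T))"
proof (rule sum.reindex_bij_witness[where i = "\<lambda>T. A \<union> T" and j = "\<lambda>S. S - A"])
  fix S assume "S \<in> {S\<in>subsets_of_card J l. A \<subseteq> S \<and> S \<subseteq> A \<union> K}"
  then show "A \<union> (S - A) = S" "f (A \<union> (S - A)) = f S" "S - A \<in> subsets_of_card K (l - card A)"
    using assms(1) by (auto simp: subsets_of_card_def card_Diff_subset Un_absorb1)
next
  fix T assume "T \<in> subsets_of_card K (l - card A)"
  moreover from this have "finite T" "A \<inter> T = {}"
    using assms(2,3) by (auto simp: subsets_of_card_def intro: finite_subset)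
  ultimately show "A \<union> T - A = T" "A \<union> T \<in> {S\<in>subsets_of_card J l. A \<subseteq> S \<and> S \<subseteq> A \<union> K}"
    using assms by (auto simp: subsets_of_card_def card_Un_disjoint)
qed

lemma vandermonde_sq_insert:
  assumes "finite S" "x \<notin> S"
  shows "vandermonde_sq z (insert x S) = vandermonde_sq z S * (\<Prod>j\<in>S. cmod (z x - z j))^2"
proof -
  have "(\<Prod>j\<in>insert x S - {i}. cmod (z i - z j)) = cmod (z x - z i) * (\<Prod>j\<in>S - {i}. cmod (z i - z j))"
    if "i \<in> S" for i
  proof -
    have "insert x S - {i} = insert x (S - {i})" "x \<notin> S - {i}"
      using that assms by auto
    then show ?thesis using assms by (simp add: norm_minus_commute)
  qed
  then have "vandermonde_sq z (insert x S) =
      (\<Prod>j\<in>S. cmod (z x - z j)) * (\<Prod>i\<in>S. cmod (z x - z i) * (\<Prod>j\<in>S - {i}. cmod (z i - z j)))"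
    using assms by (simp add: vandermonde_sq_def insert_Diff_if)
  then show ?thesis
    by (simp add: prod.distrib vandermonde_sq_def power2_eq_square)
qed

lemma vandermonde_sq_union:
  assumes "finite A" "finite T" "A \<inter> T = {}"
  shows "vandermonde_sq z (A \<union> T) =
         vandermonde_sq z A * vandermonde_sq z T * (\<Prod>j\<in>T. \<Prod>p\<in>A. cmod (z j - z p))^2"
  using assms(2,3)
proof (induction T rule: finite_induct)
  case empty
  then show ?case by (simp add: vandermonde_sq_def)
next
  case (insert x T)
  have "x \<notin> A \<union> T" "finite (A \<union> T)" using insert assms(1) by auto
  then have "vandermonde_sq z (A \<union> insert x T) =
      vandermonde_sq z (A \<union> T) * (\<Prod>j\<in>A \<union> T. cmod (z x - z j))^2"
    by (simp add: vandermonde_sq_insert)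
  also have "(\<Prod>j\<in>A \<union> T. cmod (z x - z j)) = (\<Prod>j\<in>A. cmod (z x - z j)) * (\<Prod>j\<in>T. cmod (z x - z j))"
    using assms(1) insert by (intro prod.union_disjoint) auto
  finally show ?case
    using insert by (simp add: vandermonde_sq_insert power_mult_distrib mult_ac)
qed

lemma vandermonde_sq_pos:
  assumes "finite S" "inj_on z S"
  shows "vandermonde_sq z S > 0"
  unfolding vandermonde_sq_def
  using assms by (intro prod_pos ballI) (auto dest: inj_onD)

lemma heine_weight_pos:
  assumes "finite S" "inj_on z S" "\<forall>j\<in>S. w j > 0"
  shows "heine_weight z w S > 0"
  unfolding heine_weight_def using vandermonde_sq_pos[OF assms(1,2)] assms(3) by (simp add: prod_pos)

lemma sum_heine_weight_pos:
  assumes "finite F" "F \<noteq> {}" "\<forall>S\<in>F. S \<subseteq> J" "finite J" "inj_on z J" "\<forall>j\<in>J. w j > 0"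
  shows "(\<Sum>S\<in>F. heine_weight z w S) > 0"
proof (rule sum_pos)
  fix S assume "S \<in> F"
  then have "S \<subseteq> J" using assms(3) by blast
  then show "heine_weight z w S > 0"
    using assms(4-6) by (intro heine_weight_pos) (auto intro: finite_subset inj_on_subset)
qed (use assms(1,2) in auto)

lemma heine_weight_remove:
  assumes "finite T" "x \<in> T"
  shows "heine_weight z w T = w x * heine_weight z w (T - {x}) * (\<Prod>j\<in>T - {x}. cmod (z x - z j))^2"
proof -
  have fin: "finite (T - {x})" and notin: "x \<notin> T - {x}" using assms by auto
  have "heine_weight z w (insert x (T - {x})) = w x * heine_weight z w (T - {x}) * (\<Prod>j\<in>T - {x}. cmod (z x - z j))^2"
    unfolding heine_weight_def prod.insert[OF fin notin] vandermonde_sq_insert[OF fin notin] by (simp only: mult_ac)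
  then show ?thesis using assms by (simp add: insert_absorb)
qed

lemma heine_weight_remove_nodal:
  assumes "finite T" "inj_on z T" "x \<in> T"
  shows "complex_of_real (w x) * complex_of_real (heine_weight z w (T - {x})) * (\<Prod>j\<in>T - {x}. (z x - z j)) =
         complex_of_real (heine_weight z w T) / cnj (\<Prod>j\<in>T - {x}. (z x - z j))"
proof -
  define P where "P = (\<Prod>j\<in>T - {x}. (z x - z j))"
  have "P \<noteq> 0" unfolding P_def using assms by (auto dest: inj_onD)
  have "complex_of_real (heine_weight z w T) =
      complex_of_real (w x) * complex_of_real (heine_weight z w (T - {x})) * (P * cnj P)"
    using heine_weight_remove[OF assms(1,3), of z w] complex_norm_square[of P]
    by (simp add: P_def prod_norm)
  with \<open>P \<noteq> 0\<close> show ?thesis unfolding P_def[symmetric] by (simp add: field_simps)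
qed

lemma heine_weight_union:
  assumes "finite A" "finite T" "A \<inter> T = {}"
  shows "heine_weight z w (A \<union> T) =
         heine_weight z w A * heine_weight z w T * (\<Prod>j\<in>T. \<Prod>p\<in>A. cmod (z j - z p))^2"
  unfolding heine_weight_def using assms by (simp add: vandermonde_sq_union prod.union_disjoint mult_ac)

lemma heine_weight_mult:
  "heine_weight z (\<lambda>j. w j * f j) S = heine_weight z w S * (\<Prod>j\<in>S. f j)"
  unfolding heine_weight_def by (simp add: prod.distrib mult_ac)

lemma heine_mean_scale:
  assumes "\<forall>S\<in>F. card S = n" "c \<noteq> 0"
  shows "heine_mean z (\<lambda>j. c * w j) F = heine_mean z w F"
proof -
  have "heine_weight z (\<lambda>j. c * w j) S = c ^ n * heine_weight z w S" if "S \<in> F" for S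
    using heine_weight_mult[of z w "\<lambda>_. c" S] assms(1) that by (simp add: mult.commute)
  then show ?thesis
    using assms(2) unfolding heine_mean_def
    by (simp add: sum_distrib_left[symmetric] mult.assoc cong: sum.cong)
qed

lemma degree_prod_linear:
  fixes z :: "'a \<Rightarrow> 'b :: field"
  assumes "finite S"
  shows "degree (\<Prod>j\<in>S. [:- z j, 1:]) = card S" "coeff (\<Prod>j\<in>S. [:- z j, 1:]) (card S) = 1"
proof -
  show d: "degree (\<Prod>j\<in>S. [:- z j, 1:]) = card S"
    by (subst degree_prod_eq_sum_degree) auto
  have "lead_coeff (\<Prod>j\<in>S. [:- z j, 1:]) = 1" by (simp add: lead_coeff_prod)
  then show "coeff (\<Prod>j\<in>S. [:- z j, 1:]) (card S) = 1" by (simp add: d)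
qed

(* The sum is the coefficient of degree card T - 1 of the Lagrange interpolant of q at the
   nodes, and that interpolant is q itself. *)
lemma divided_difference_eq_0:
  fixes z :: "'a \<Rightarrow> 'b :: field" and q :: "'b poly"
  assumes fin: "finite T" and inj: "inj_on z T" and deg: "degree q + 1 < card T"
  shows "(\<Sum>x\<in>T. poly q (z x) / (\<Prod>j\<in>T - {x}. (z x - z j))) = 0"
proof -
  define c where "c x = poly q (z x) / (\<Prod>j\<in>T - {x}. (z x - z j))" for x
  define L where "L = (\<Sum>x\<in>T. smult (c x) (\<Prod>j\<in>T - {x}. [:- z j, 1:]))"
  have card_remove: "card (T - {x}) = card T - 1" if "x \<in> T" for x
    using fin that by simp
  have nodal_nonzero: "(\<Prod>j\<in>T - {x}. (z x - z j)) \<noteq> 0" if "x \<in> T" for x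
    using fin inj that by (auto dest: inj_onD)
  have "degree L \<le> card T - 1"
    unfolding L_def using fin
    by (intro degree_sum_le order.trans[OF degree_smult_le])
       (simp_all add: degree_prod_linear card_remove)
  moreover have "poly L (z y) = poly q (z y)" if "y \<in> T" for y
  proof -
    have "poly L (z y) = (\<Sum>x\<in>T. c x * (\<Prod>j\<in>T - {x}. (z y - z j)))"
      unfolding L_def by (simp add: poly_sum poly_prod)
    also have "\<dots> = c y * (\<Prod>j\<in>T - {y}. (z y - z j))"
      using fin that by (subst sum.mono_neutral_right[of T "{y}"]) auto
    also have "\<dots> = poly q (z y)"
      using nodal_nonzero[OF that] unfolding c_def by simp
    finally show ?thesis .
  qed
  ultimately have "L = q"
    using deg card_image[OF inj] by (intro poly_eqI_degree[of "z ` T"]) auto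
  have "coeff L (card T - 1) = (\<Sum>x\<in>T. c x)"
    unfolding L_def coeff_sum coeff_smult
  proof (intro sum.cong refl)
    fix x assume "x \<in> T"
    then have "coeff (\<Prod>j\<in>T - {x}. [:- z j, 1:]) (card T - 1) = 1"
      using fin degree_prod_linear(2)[of "T - {x}" z] card_remove by simp
    then show "c x * coeff (\<Prod>j\<in>T - {x}. [:- z j, 1:]) (card T - 1) = c x" by simp
  qed
  moreover have "coeff q (card T - 1) = 0" using deg by (intro coeff_eq_0) linarith
  ultimately show ?thesis using \<open>L = q\<close> unfolding c_def by simp
qed

lemma heine_poly_monic:
  assumes "finite J" "inj_on z J" "\<forall>j\<in>J. w j > 0" "n \<le> card J"
  shows "degree (heine_poly z w J n) = n" "coeff (heine_poly z w J n) n = 1"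
proof -
  define C where "C = (\<Sum>S\<in>subsets_of_card J n. heine_weight z w S)"
  have "C > 0"
    unfolding C_def using assms subsets_of_card_nonempty[OF assms(1,4)]
    by (intro sum_heine_weight_pos) (auto simp: subsets_of_card_def)
  have subset: "finite S \<and> card S = n" if "S \<in> subsets_of_card J n" for S
    using that assms(1) unfolding subsets_of_card_def by (auto intro: finite_subset)
  have top_coeff: "coeff (\<Prod>j\<in>S. [:- z j, 1:]) n = 1" if "S \<in> subsets_of_card J n" for S
    using subset[OF that] degree_prod_linear(2)[of S z] by simp
  have "coeff (heine_poly z w J n) n =
      (1 / complex_of_real C) * (\<Sum>S\<in>subsets_of_card J n. complex_of_real (heine_weight z w S))"
    unfolding heine_poly_def C_def coeff_smult coeff_sum by (simp add: top_coeff cong: sum.cong)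
  also have "\<dots> = 1" using \<open>C > 0\<close> unfolding C_def by (simp flip: of_real_sum)
  finally show lead: "coeff (heine_poly z w J n) n = 1" .
  have "degree (heine_poly z w J n) \<le> n"
    unfolding heine_poly_def
  proof (rule order.trans[OF degree_smult_le], rule degree_sum_le)
    show "finite (subsets_of_card J n)" using assms(1) by simp
    fix S assume "S \<in> subsets_of_card J n"
    then have "degree (\<Prod>j\<in>S. [:- z j, 1:]) = n" using subset degree_prod_linear(1) by auto
    then show "degree (smult (complex_of_real (heine_weight z w S)) (\<Prod>j\<in>S. [:- z j, 1:])) \<le> n"
      by (metis degree_smult_le)
  qed
  moreover have "n \<le> degree (heine_poly z w J n)" using lead by (intro le_degree) simp
  ultimately show "degree (heine_poly z w J n) = n" by simp
qed

lemma heine_poly_orthogonal: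
  fixes q :: "complex poly"
  assumes fin: "finite J" and inj: "inj_on z J" and deg: "degree q < n"
  shows "(\<Sum>x\<in>J. complex_of_real (w x) * poly (heine_poly z w J n) (z x) * cnj (poly q (z x))) = 0"
proof -
  define C where "C = complex_of_real (\<Sum>S\<in>subsets_of_card J n. heine_weight z w S)"
  define f where "f S x = complex_of_real (w x) * complex_of_real (heine_weight z w S) *
    (\<Prod>i\<in>S. (z x - z i)) * cnj (poly q (z x))" for S x
  have subset: "finite T \<and> T \<subseteq> J \<and> card T = k" if "T \<in> subsets_of_card J k" for T k
    using that fin unfolding subsets_of_card_def by (auto intro: finite_subset)
  have "(\<Sum>x\<in>J. complex_of_real (w x) * poly (heine_poly z w J n) (z x) * cnj (poly q (z x)))
      = (1 / C) * (\<Sum>S\<in>subsets_of_card J n. \<Sum>x\<in>J. f S x)"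
    unfolding heine_poly_def C_def f_def
    by (simp add: poly_sum poly_prod sum_distrib_left sum_distrib_right mult_ac sum.swap[of _ J])
  also have "(\<Sum>S\<in>subsets_of_card J n. \<Sum>x\<in>J. f S x) = (\<Sum>S\<in>subsets_of_card J n. \<Sum>x\<in>J - S. f S x)"
  proof (rule sum.cong[OF refl], rule sum.mono_neutral_right)
    fix S assume "S \<in> subsets_of_card J n"
    then show "finite J" "J - S \<subseteq> J" "\<forall>x\<in>J - (J - S). f S x = 0"
      using fin subset[of S] by (auto simp: f_def)
  qed
  also have "\<dots> = (\<Sum>T\<in>subsets_of_card J (Suc n). \<Sum>x\<in>T. f (T - {x}) x)"
    using fin by (rule sum_subsets_of_card_Suc)
  also have "\<dots> = (\<Sum>T\<in>subsets_of_card J (Suc n). complex_of_real (heine_weight z w T) *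
        cnj (\<Sum>x\<in>T. poly q (z x) / (\<Prod>j\<in>T - {x}. (z x - z j))))"
  proof (intro sum.cong refl)
    fix T assume "T \<in> subsets_of_card J (Suc n)"
    then have fT: "finite T" and injT: "inj_on z T" using subset inj by (auto intro: inj_on_subset)
    have "f (T - {x}) x = complex_of_real (heine_weight z w T) * cnj (poly q (z x) / (\<Prod>j\<in>T - {x}. (z x - z j)))"
      if "x \<in> T" for x
      unfolding f_def heine_weight_remove_nodal[OF fT injT that] by (simp add: complex_cnj_divide)
    then show "(\<Sum>x\<in>T. f (T - {x}) x) = complex_of_real (heine_weight z w T) *
        cnj (\<Sum>x\<in>T. poly q (z x) / (\<Prod>j\<in>T - {x}. (z x - z j)))"
      by (simp add: sum_distrib_left cnj_sum)
  qed
  also have "\<dots> = 0"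
    using subset inj deg by (intro sum.neutral ballI)
      (simp add: divided_difference_eq_0 inj_on_subset)
  finally show ?thesis by simp
qed

lemma l2ip_diff_left: "l2ip S w (p - q) r = l2ip S w p r - l2ip S w q r"
  unfolding l2ip_def by (simp add: sum_subtractf algebra_simps)

lemma l2ip_self: "l2ip S w p p = complex_of_real (\<Sum>x\<in>S. w x * (cmod (poly p x))^2)"
  unfolding l2ip_def by (simp add: complex_norm_square mult.assoc del: of_real_power)

lemma monicOP_eqI:
  assumes fin: "finite S" and pos: "\<forall>x\<in>S. w x > 0" and n: "n \<le> card S"
    and p: "degree p = n" "lead_coeff p = 1" "\<forall>q. degree q < n \<longrightarrow> l2ip S w p q = 0"
  shows "monicOP S w n = p"
  unfolding monicOP_def
proof (rule the_equality)
  show "degree p = n \<and> lead_coeff p = 1 \<and> (\<forall>q. degree q < n \<longrightarrow> l2ip S w p q = 0)"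
    using p by blast
  fix p' assume p': "degree p' = n \<and> lead_coeff p' = 1 \<and> (\<forall>q. degree q < n \<longrightarrow> l2ip S w p' q = 0)"
  show "p' = p"
  proof (rule ccontr)
    define d where "d = p' - p"
    assume "p' \<noteq> p"
    then have "d \<noteq> 0" unfolding d_def by simp
    have "degree d < n"
    proof (rule degree_lessI)
      show "d \<noteq> 0 \<or> 0 < n" using \<open>d \<noteq> 0\<close> by simp
      show "\<forall>k\<ge>n. coeff d k = 0"
        using p p' unfolding d_def by (auto simp: coeff_eq_0 le_less)
    qed
    then have "l2ip S w d d = 0"
      using p p' unfolding d_def by (simp add: l2ip_diff_left)
    then have "(\<Sum>x\<in>S. w x * (cmod (poly d x))^2) = 0"
      by (simp only: l2ip_self of_real_eq_0_iff)
    then have "\<forall>x\<in>S. w x * (cmod (poly d x))^2 = 0"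
      using fin pos by (subst (asm) sum_nonneg_eq_0_iff) (auto intro: less_imp_le)
    then have "\<forall>x\<in>S. poly d x = 0"
      using pos by (metis less_irrefl mult_eq_0_iff norm_eq_zero power_eq_0_iff)
    then have "d = 0"
      using \<open>degree d < n\<close> n by (intro poly_eqI_degree[of S]) auto
    with \<open>d \<noteq> 0\<close> show False ..
  qed
qed

lemma dmeas_w_at_node:
  assumes "inj_on z J" "j \<in> J"
  shows "dmeas_w z w J (z j) = w j"
proof -
  have "{i \<in> J. z i = z j} = {j}" using assms by (auto dest: inj_onD)
  then show ?thesis unfolding dmeas_w_def by simp
qed

lemma l2ip_dmeas_w:
  assumes "inj_on z J"
  shows "l2ip (z ` J) (dmeas_w z w J) p q =
         (\<Sum>j\<in>J. complex_of_real (w j) * poly p (z j) * cnj (poly q (z j)))"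
  unfolding l2ip_def using assms by (simp add: sum.reindex dmeas_w_at_node)

lemma monicOP_dmeas_w:
  assumes fin: "finite J" and inj: "inj_on z J" and pos: "\<forall>j\<in>J. w j > 0" and n: "n \<le> card J"
  shows "monicOP (z ` J) (dmeas_w z w J) n = heine_poly z w J n"
  using fin pos n heine_poly_monic[OF assms] heine_poly_orthogonal[OF fin inj]
  by (intro monicOP_eqI) (auto simp: dmeas_w_at_node[OF inj] l2ip_dmeas_w[OF inj] card_image[OF inj])

lemma verb_disc_eq_heine_mean:
  assumes "finite J" "inj_on z J" "\<forall>j\<in>J. w j > 0" "Suc n \<le> card J"
  shows "verb_disc z w J n = - cnj (heine_mean z w (subsets_of_card J (Suc n)))"
  unfolding verb_disc_def verblunsky_def monicOP_dmeas_w[OF assms] heine_mean_def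
  by (simp add: heine_poly_def poly_sum poly_prod)

lemma tendsto_exp_weighted_average:
  fixes x :: "'i \<Rightarrow> 'a :: real_normed_field"
  assumes fin: "finite I" and le: "\<forall>i\<in>I. g i \<le> M" and top: "(\<Sum>i\<in>{i\<in>I. g i = M}. c i) \<noteq> 0"
  shows "((\<lambda>t. (\<Sum>i\<in>I. of_real (c i * exp (t * g i)) * x i) / of_real (\<Sum>i\<in>I. c i * exp (t * g i)))
           \<longlongrightarrow> (\<Sum>i\<in>{i\<in>I. g i = M}. of_real (c i) * x i) / of_real (\<Sum>i\<in>{i\<in>I. g i = M}. c i)) at_top"
proof -
  define e where "e t i = exp ((g i - M) * t)" for t i
  define \<delta> where "\<delta> i = (if g i = M then 1 else 0 :: real)" for i
  have e_lim: "((\<lambda>t. e t i) \<longlongrightarrow> \<delta> i) at_top" if "i \<in> I" for i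
  proof (cases "g i = M")
    case False
    with le that have "g i - M < 0" by force
    then have "filterlim (\<lambda>t. (g i - M) * t) at_bot at_top"
      by (rule filterlim_tendsto_neg_mult_at_bot[OF tendsto_const _ filterlim_ident])
    with False show ?thesis
      unfolding e_def \<delta>_def by (simp add: filterlim_compose[OF exp_at_bot])
  qed (simp add: e_def \<delta>_def)
  have rescale: "exp (t * g i) = exp (t * M) * e t i" for t i
    unfolding e_def by (simp add: exp_add[symmetric] algebra_simps)
  have "(\<Sum>i\<in>I. of_real (c i * exp (t * g i)) * x i) =
      of_real (exp (t * M)) * (\<Sum>i\<in>I. of_real (c i * e t i) * x i)"
    "(\<Sum>i\<in>I. c i * exp (t * g i)) = exp (t * M) * (\<Sum>i\<in>I. c i * e t i)" for t
    by (simp_all add: rescale sum_distrib_left mult_ac)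
  then have "(\<Sum>i\<in>I. of_real (c i * exp (t * g i)) * x i) / of_real (\<Sum>i\<in>I. c i * exp (t * g i))
      = (\<Sum>i\<in>I. of_real (c i * e t i) * x i) / of_real (\<Sum>i\<in>I. c i * e t i)" for t
    by (simp del: of_real_sum)
  moreover have limit_sums: "(\<Sum>i\<in>I. of_real (c i * \<delta> i) * x i) = (\<Sum>i\<in>{i\<in>I. g i = M}. of_real (c i) * x i)"
    "(\<Sum>i\<in>I. c i * \<delta> i) = (\<Sum>i\<in>{i\<in>I. g i = M}. c i)"
    unfolding sum.inter_filter[OF fin] by (auto simp: \<delta>_def intro: sum.cong)
  moreover have "((\<lambda>t. (\<Sum>i\<in>I. of_real (c i * e t i) * x i) / of_real (\<Sum>i\<in>I. c i * e t i))
      \<longlongrightarrow> (\<Sum>i\<in>I. of_real (c i * \<delta> i) * x i) / of_real (\<Sum>i\<in>I. c i * \<delta> i)) at_top"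
    using top limit_sums(2) by (intro tendsto_intros e_lim) (simp_all del: of_real_sum)
  ultimately show ?thesis by simp
qed

lemma verb_disc_sigma_w:
  assumes inj: "inj_on z {1..m}" and pos: "\<forall>j\<in>{1..m}. \<mu> j > 0" and l: "0 < l" "l \<le> m"
  shows "verb_disc z (sigma_w G z \<mu> m t) {1..m} (l - 1) =
    - cnj ((\<Sum>S\<in>subsets_of_card {1..m} l.
              complex_of_real (heine_weight z \<mu> S * exp (t * (\<Sum>j\<in>S. G (z j)))) * (\<Prod>j\<in>S. - z j)) /
           complex_of_real (\<Sum>S\<in>subsets_of_card {1..m} l. heine_weight z \<mu> S * exp (t * (\<Sum>j\<in>S. G (z j)))))"
proof -
  define N where "N = (\<Sum>r\<in>{1..m}. \<mu> r * exp (t * G (z r)))"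
  have "N > 0" unfolding N_def using pos l by (intro sum_pos) auto
  have sigma: "sigma_w G z \<mu> m t = (\<lambda>j. (1 / N) * (\<mu> j * exp (t * G (z j))))"
    by (simp add: fun_eq_iff sigma_w_def N_def)
  have subset: "finite S" "card S = l" if "S \<in> subsets_of_card {1..m} l" for S
    using that by (auto simp: subsets_of_card_def intro: finite_subset)
  have exp_weight: "heine_weight z (\<lambda>j. \<mu> j * exp (t * G (z j))) S = heine_weight z \<mu> S * exp (t * (\<Sum>j\<in>S. G (z j)))"
    if "S \<in> subsets_of_card {1..m} l" for S
    using subset(1)[OF that] by (simp add: heine_weight_mult exp_sum sum_distrib_left)
  have "verb_disc z (sigma_w G z \<mu> m t) {1..m} (l - 1) =
      - cnj (heine_mean z (sigma_w G z \<mu> m t) (subsets_of_card {1..m} l))"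
    using verb_disc_eq_heine_mean[OF _ inj, of "sigma_w G z \<mu> m t" "l - 1"] pos l \<open>N > 0\<close>
    by (simp add: sigma)
  also have "heine_mean z (sigma_w G z \<mu> m t) (subsets_of_card {1..m} l) =
      heine_mean z (\<lambda>j. \<mu> j * exp (t * G (z j))) (subsets_of_card {1..m} l)"
    unfolding sigma using subset(2) \<open>N > 0\<close> by (intro heine_mean_scale) auto
  finally show ?thesis
    unfolding heine_mean_def by (simp only: exp_weight cong: sum.cong)
qed

lemma tendsto_verb_disc_sigma_w:
  assumes inj: "inj_on z {1..m}" and pos: "\<forall>j\<in>{1..m}. \<mu> j > 0" and l: "0 < l" "l \<le> m"
    and le: "\<forall>S\<in>subsets_of_card {1..m} l. (\<Sum>j\<in>S. G (z j)) \<le> M"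
    and attained: "{S\<in>subsets_of_card {1..m} l. (\<Sum>j\<in>S. G (z j)) = M} \<noteq> {}"
  shows "((\<lambda>t. verb_disc z (sigma_w G z \<mu> m t) {1..m} (l - 1)) \<longlongrightarrow>
           - cnj (heine_mean z \<mu> {S\<in>subsets_of_card {1..m} l. (\<Sum>j\<in>S. G (z j)) = M})) at_top"
proof -
  have "(\<Sum>S\<in>{S\<in>subsets_of_card {1..m} l. (\<Sum>j\<in>S. G (z j)) = M}. heine_weight z \<mu> S) \<noteq> 0"
    using attained inj pos by (intro sum_heine_weight_pos[THEN less_imp_neq, symmetric])
      (auto simp: subsets_of_card_def)
  from tendsto_exp_weighted_average[where c = "heine_weight z \<mu>" and x = "\<lambda>S. \<Prod>j\<in>S. - z j",
      OF finite_subsets_of_card[OF finite_atLeastAtMost] le this]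
  show ?thesis
    unfolding verb_disc_sigma_w[OF inj pos l] heine_mean_def by (intro tendsto_minus tendsto_cnj)
qed

lemma sum_le_top_level:
  fixes g :: "'a \<Rightarrow> real"
  assumes fin: "finite S" "finite A"
    and above: "\<forall>j\<in>A. g j > \<gamma>" and level: "\<forall>j\<in>K. g j = \<gamma>" and below: "\<forall>j\<in>S - A - K. g j < \<gamma>"
    and card: "card S = card A + k"
  shows "(\<Sum>j\<in>S. g j) \<le> (\<Sum>j\<in>A. g j) + real k * \<gamma>"
    and "(\<Sum>j\<in>S. g j) = (\<Sum>j\<in>A. g j) + real k * \<gamma> \<longleftrightarrow> A \<subseteq> S \<and> S \<subseteq> A \<union> K"
proof -
  define h where "h j = g j - \<gamma>" for j
  have "(\<Sum>j\<in>S. g j) - ((\<Sum>j\<in>A. g j) + real k * \<gamma>) = (\<Sum>j\<in>S. h j) - (\<Sum>j\<in>A. h j)"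
    using card by (simp add: h_def sum_subtractf algebra_simps)
  also have "(\<Sum>j\<in>S. h j) = (\<Sum>j\<in>S \<inter> A. h j) + (\<Sum>j\<in>S - A - K. h j)"
  proof -
    have "(\<Sum>j\<in>S - A. h j) = (\<Sum>j\<in>S - A - K. h j)"
      using fin level by (intro sum.mono_neutral_right) (auto simp: h_def)
    then show ?thesis using sum.Int_Diff[OF fin(1), of h A] by simp
  qed
  also have "(\<Sum>j\<in>A. h j) = (\<Sum>j\<in>S \<inter> A. h j) + (\<Sum>j\<in>A - S. h j)"
    using sum.Int_Diff[OF fin(2), of h S] by (simp add: Int_commute)
  finally have diff: "(\<Sum>j\<in>S. g j) - ((\<Sum>j\<in>A. g j) + real k * \<gamma>) =
      (\<Sum>j\<in>S - A - K. h j) - (\<Sum>j\<in>A - S. h j)" by simp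
  have neg: "(\<Sum>j\<in>S - A - K. h j) \<le> 0"
    using below by (intro sum_nonpos) (simp add: h_def less_imp_le)
  have "(\<Sum>j\<in>S - A - K. h j) < 0" if "S - A - K \<noteq> {}"
    using sum_pos[of "S - A - K" "\<lambda>j. - h j"] that fin below by (simp add: h_def sum_subtractf)
  then have neg_iff: "(\<Sum>j\<in>S - A - K. h j) = 0 \<longleftrightarrow> S - A - K = {}" by (metis less_irrefl sum.empty)
  have pos: "(\<Sum>j\<in>A - S. h j) \<ge> 0"
    using above by (intro sum_nonneg) (simp add: h_def less_imp_le)
  have "(\<Sum>j\<in>A - S. h j) > 0" if "A - S \<noteq> {}"
    using sum_pos[of "A - S" h] that fin above by (simp add: h_def)
  then have pos_iff: "(\<Sum>j\<in>A - S. h j) = 0 \<longleftrightarrow> A - S = {}" by (metis less_irrefl sum.empty)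
  show "(\<Sum>j\<in>S. g j) \<le> (\<Sum>j\<in>A. g j) + real k * \<gamma>"
    using diff neg pos by linarith
  have "(\<Sum>j\<in>S. g j) = (\<Sum>j\<in>A. g j) + real k * \<gamma> \<longleftrightarrow>
      (\<Sum>j\<in>S - A - K. h j) = 0 \<and> (\<Sum>j\<in>A - S. h j) = 0"
    using diff neg pos by linarith
  also have "\<dots> \<longleftrightarrow> A \<subseteq> S \<and> S \<subseteq> A \<union> K"
    unfolding neg_iff pos_iff by blast
  finally show "(\<Sum>j\<in>S. g j) = (\<Sum>j\<in>A. g j) + real k * \<gamma> \<longleftrightarrow> A \<subseteq> S \<and> S \<subseteq> A \<union> K" .
qed

lemma antitone_interval_le:
  fixes f :: "nat \<Rightarrow> 'a :: order"
  assumes Suc_le: "\<forall>j. 1 \<le> j \<and> j < m \<longrightarrow> f (Suc j) \<le> f j" and "1 \<le> i" "i \<le> j" "j \<le> m"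
  shows "f j \<le> f i"
  using assms(3,4)
proof (induction j rule: dec_induct)
  case (step n)
  then have "f n \<le> f i" "f (Suc n) \<le> f n" using Suc_le assms(2) by auto
  then show ?case by (rule order.trans[rotated])
qed simp

lemma K_group_levels:
  assumes ordered: "\<forall>j. 1 \<le> j \<and> j < m \<longrightarrow> G (z j) \<ge> G (z (Suc j))"
    and Kgroup: "is_K_group G z m a b"
  shows "\<forall>j\<in>{1..a}. G (z j) > G (z (a + 1))"
    and "\<forall>j\<in>{a+1..b}. G (z j) = G (z (a + 1))"
    and "\<forall>j\<in>{b+1..m}. G (z j) < G (z (a + 1))"
proof -
  have ab: "a < b" "b \<le> m" and level: "\<forall>j\<in>{a+1..b}. G (z j) = G (z (a + 1))"
    and left: "a = 0 \<or> G (z a) \<noteq> G (z (a + 1))" and right: "b = m \<or> G (z b) \<noteq> G (z (b + 1))"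
    using Kgroup unfolding is_K_group_def by blast+
  note antitone = antitone_interval_le[of m "\<lambda>j. G (z j)", OF ordered]
  show "\<forall>j\<in>{a+1..b}. G (z j) = G (z (a + 1))" by (fact level)
  show "\<forall>j\<in>{1..a}. G (z j) > G (z (a + 1))"
  proof
    fix j assume j: "j \<in> {1..a}"
    then have "G (z a) \<le> G (z j)" using antitone ab by simp
    moreover have "G (z (a + 1)) < G (z a)"
    proof -
      have "G (z a) \<noteq> G (z (a + 1))" "G (z (a + 1)) \<le> G (z a)" using left ordered ab j by auto
      then show ?thesis by (auto simp: less_le)
    qed
    ultimately show "G (z j) > G (z (a + 1))" by linarith
  qed
  show "\<forall>j\<in>{b+1..m}. G (z j) < G (z (a + 1))"
  proof
    fix j assume j: "j \<in> {b+1..m}"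
    then have "G (z j) \<le> G (z (b + 1))" using antitone by simp
    moreover have "G (z (b + 1)) < G (z b)"
    proof -
      have "G (z b) \<noteq> G (z (b + 1))" "G (z (b + 1)) \<le> G (z b)" using right ordered ab j by auto
      then show ?thesis by (auto simp: less_le)
    qed
    moreover have "G (z b) = G (z (a + 1))" using ab by (intro level[rule_format]) simp
    ultimately show "G (z j) < G (z (a + 1))" by linarith
  qed
qed

lemma sum_le_K_group_level:
  assumes ordered: "\<forall>j. 1 \<le> j \<and> j < m \<longrightarrow> G (z j) \<ge> G (z (Suc j))"
    and Kgroup: "is_K_group G z m a b" and l: "l \<in> {a+1..b}" and S: "S \<in> subsets_of_card {1..m} l"
  shows "(\<Sum>j\<in>S. G (z j)) \<le> (\<Sum>j\<in>{1..a}. G (z j)) + real (l - a) * G (z (a + 1))"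
    and "(\<Sum>j\<in>S. G (z j)) = (\<Sum>j\<in>{1..a}. G (z j)) + real (l - a) * G (z (a + 1)) \<longleftrightarrow>
         {1..a} \<subseteq> S \<and> S \<subseteq> {1..a} \<union> {a+1..b}"
proof -
  note levels = K_group_levels[OF ordered Kgroup]
  have "finite S" "card S = card {1..a} + (l - a)" "S - {1..a} - {a+1..b} \<subseteq> {b+1..m}"
    using S l by (auto simp: subsets_of_card_def intro: finite_subset)
  with levels(3) have "\<forall>j\<in>S - {1..a} - {a+1..b}. G (z j) < G (z (a + 1))" by blast
  note top_level = sum_le_top_level[OF \<open>finite S\<close> _ levels(1,2) this \<open>card S = _\<close>]
  then show "(\<Sum>j\<in>S. G (z j)) \<le> (\<Sum>j\<in>{1..a}. G (z j)) + real (l - a) * G (z (a + 1))"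
    and "(\<Sum>j\<in>S. G (z j)) = (\<Sum>j\<in>{1..a}. G (z j)) + real (l - a) * G (z (a + 1)) \<longleftrightarrow>
         {1..a} \<subseteq> S \<and> S \<subseteq> {1..a} \<union> {a+1..b}"
    by simp_all
qed

lemma muK_numerator_pos:
  fixes a b r :: nat
  assumes "inj_on z {1..b}" "\<forall>j\<in>{1..b}. \<mu> j > 0" "r \<in> {a+1..b}"
  shows "(\<Prod>p\<in>{1..a}. (cmod (z r - z p))^2) * \<mu> r > 0"
proof -
  have "z r \<noteq> z p" if "p \<in> {1..a}" for p
  proof -
    have "r \<noteq> p" "r \<in> {1..b}" "p \<in> {1..b}" using that assms(3) by fastforce+
    then show ?thesis using assms(1) by (meson inj_onD)
  qed
  then show ?thesis using assms(2,3) by (auto intro!: prod_pos mult_pos_pos)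
qed

lemma muK_normalizer_pos:
  fixes a b :: nat
  assumes "inj_on z {1..b}" "\<forall>j\<in>{1..b}. \<mu> j > 0" "a < b"
  shows "(\<Sum>r\<in>{a+1..b}. (\<Prod>p\<in>{1..a}. (cmod (z r - z p))^2) * \<mu> r) > 0"
  using assms by (intro sum_pos muK_numerator_pos) auto

lemma muK_w_pos:
  assumes "inj_on z {1..b}" "\<forall>j\<in>{1..b}. \<mu> j > 0" "a < b"
  shows "\<forall>j\<in>{a+1..b}. muK_w z \<mu> a b j > 0"
  unfolding muK_w_def using assms by (intro ballI divide_pos_pos muK_numerator_pos muK_normalizer_pos) auto

lemma heine_weight_prefix_union:
  assumes "inj_on z {1..b}" "\<forall>j\<in>{1..b}. \<mu> j > 0" "a < b" "T \<subseteq> {a+1..b}"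
  shows "heine_weight z \<mu> ({1..a} \<union> T) =
    heine_weight z \<mu> {1..a} * (\<Sum>r\<in>{a+1..b}. (\<Prod>p\<in>{1..a}. (cmod (z r - z p))^2) * \<mu> r) ^ card T *
    heine_weight z (muK_w z \<mu> a b) T"
proof -
  define D where "D = (\<Sum>r\<in>{a+1..b}. (\<Prod>p\<in>{1..a}. (cmod (z r - z p))^2) * \<mu> r)"
  define P where "P j = (\<Prod>p\<in>{1..a}. (cmod (z j - z p))^2)" for j
  have "D \<noteq> 0" using muK_normalizer_pos[OF assms(1-3)] by (simp add: D_def)
  have "finite T" "{1..a} \<inter> T = {}" using assms(4) by (auto intro: finite_subset)
  have muK: "muK_w z \<mu> a b = (\<lambda>j. \<mu> j * (P j / D))"
    by (simp add: fun_eq_iff muK_w_def P_def D_def)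
  have "heine_weight z (muK_w z \<mu> a b) T = heine_weight z \<mu> T * (\<Prod>j\<in>T. P j) / D ^ card T"
    unfolding muK heine_weight_mult using \<open>finite T\<close> by (simp add: prod_dividef)
  moreover have "heine_weight z \<mu> ({1..a} \<union> T) = heine_weight z \<mu> {1..a} * heine_weight z \<mu> T * (\<Prod>j\<in>T. P j)"
    using heine_weight_union[OF _ \<open>finite T\<close> \<open>{1..a} \<inter> T = {}\<close>]
    by (simp add: P_def prod_power_distrib)
  ultimately show ?thesis using \<open>D \<noteq> 0\<close> unfolding D_def[symmetric] by simp
qed

lemma heine_mean_prefix_union:
  assumes "inj_on z {1..b}" "\<forall>j\<in>{1..b}. \<mu> j > 0" "a < b" "{1..b} \<subseteq> J" "a \<le> l"
  shows "heine_mean z \<mu> {S\<in>subsets_of_card J l. {1..a} \<subseteq> S \<and> S \<subseteq> {1..a} \<union> {a+1..b}} =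
    (\<Prod>p\<in>{1..a}. - z p) * heine_mean z (muK_w z \<mu> a b) (subsets_of_card {a+1..b} (l - a))"
proof -
  define \<kappa> where "\<kappa> = heine_weight z \<mu> {1..a} *
    (\<Sum>r\<in>{a+1..b}. (\<Prod>p\<in>{1..a}. (cmod (z r - z p))^2) * \<mu> r) ^ (l - a)"
  have "\<kappa> \<noteq> 0"
    unfolding \<kappa>_def
    using heine_weight_pos[OF _ inj_on_subset[OF assms(1)], of "{1..a}" \<mu>] muK_normalizer_pos[OF assms(1-3)] assms(2,3)
    by auto
  have between: "(\<Sum>S\<in>{S\<in>subsets_of_card J l. {1..a} \<subseteq> S \<and> S \<subseteq> {1..a} \<union> {a+1..b}}. f S) =
      (\<Sum>T\<in>subsets_of_card {a+1..b} (l - a). f ({1..a} \<union> T))" for f :: "nat set \<Rightarrow> 'b :: comm_monoid_add"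
  proof -
    have "{1..a} \<union> {a+1..b} \<subseteq> J" using assms(3,4) by auto
    then show ?thesis using sum_subsets_between[of "{1..a}" "{a+1..b}" J l f] assms(5) by simp
  qed
  have T: "finite T" "T \<subseteq> {a+1..b}" "card T = l - a" "{1..a} \<inter> T = {}"
    if "T \<in> subsets_of_card {a+1..b} (l - a)" for T
    using that by (auto simp: subsets_of_card_def intro: finite_subset)
  have weight: "heine_weight z \<mu> ({1..a} \<union> T) = \<kappa> * heine_weight z (muK_w z \<mu> a b) T"
    if "T \<in> subsets_of_card {a+1..b} (l - a)" for T
    using heine_weight_prefix_union[OF assms(1-3) T(2)[OF that]] T(3)[OF that] by (simp add: \<kappa>_def)
  have monomial: "(\<Prod>j\<in>{1..a} \<union> T. - z j) = (\<Prod>p\<in>{1..a}. - z p) * (\<Prod>j\<in>T. - z j)"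
    if "T \<in> subsets_of_card {a+1..b} (l - a)" for T
    using T[OF that] by (simp add: prod.union_disjoint)
  have numerator: "(\<Sum>T\<in>subsets_of_card {a+1..b} (l - a).
        complex_of_real (heine_weight z \<mu> ({1..a} \<union> T)) * (\<Prod>j\<in>{1..a} \<union> T. - z j)) =
      complex_of_real \<kappa> * (\<Prod>p\<in>{1..a}. - z p) *
      (\<Sum>T\<in>subsets_of_card {a+1..b} (l - a). complex_of_real (heine_weight z (muK_w z \<mu> a b) T) * (\<Prod>j\<in>T. - z j))"
    unfolding sum_distrib_left by (rule sum.cong[OF refl]) (simp only: weight monomial of_real_mult mult_ac)
  have denominator: "(\<Sum>T\<in>subsets_of_card {a+1..b} (l - a). heine_weight z \<mu> ({1..a} \<union> T)) =
      \<kappa> * (\<Sum>T\<in>subsets_of_card {a+1..b} (l - a). heine_weight z (muK_w z \<mu> a b) T)"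
    unfolding sum_distrib_left by (rule sum.cong[OF refl]) (simp only: weight)
  show ?thesis
    unfolding heine_mean_def between numerator denominator using \<open>\<kappa> \<noteq> 0\<close> by simp
qed

lemma verb_disc_muK_w:
  assumes "inj_on z {1..b}" "\<forall>j\<in>{1..b}. \<mu> j > 0" "a < l" "l \<le> b"
  shows "verb_disc z (muK_w z \<mu> a b) {a+1..b} (l - a - 1) =
    - cnj (heine_mean z (muK_w z \<mu> a b) (subsets_of_card {a+1..b} (l - a)))"
proof -
  have "Suc (l - a - 1) = l - a" using assms(3) by simp
  then show ?thesis
    using verb_disc_eq_heine_mean[of "{a+1..b}" z "muK_w z \<mu> a b" "l - a - 1"] assms
      muK_w_pos[OF assms(1,2)] by (simp add: inj_on_subset[OF assms(1)])
qed

theorem theorem1p5: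
  fixes m :: nat and z :: "nat \<Rightarrow> complex" and \<mu> :: "nat \<Rightarrow> real"
    and G :: "complex \<Rightarrow> real" and a b l :: nat
  assumes distinct: "inj_on z {1..m}"
    and circle: "\<forall>j\<in>{1..m}. cmod (z j) = 1"
    and pos: "\<forall>j\<in>{1..m}. \<mu> j > 0"
    and total: "(\<Sum>j\<in>{1..m}. \<mu> j) = 1"
    and ordered: "\<forall>j. 1 \<le> j \<and> j < m \<longrightarrow> G (z j) \<ge> G (z (Suc j))"
    and Kgroup: "is_K_group G z m a b"
    and l: "l \<in> {a+1..b}"
  shows "((\<lambda>t. verb_disc z (sigma_w G z \<mu> m t) {1..m} (l - 1)) \<longlongrightarrow>
           (-1) ^ a * cnj (\<Prod>p\<in>{1..a}. z p) * verb_disc z (muK_w z \<mu> a b) {a+1..b} (l - a - 1))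
         at_top"
proof -
  have ab: "a < b" "b \<le> m" and la: "a < l" "l \<le> b"
    using Kgroup l by (auto simp: is_K_group_def)
  have inj_b: "inj_on z {1..b}" and pos_b: "\<forall>j\<in>{1..b}. \<mu> j > 0" and "{1..b} \<subseteq> {1..m}"
    using distinct pos ab by (auto intro: inj_on_subset)
  define M where "M = (\<Sum>j\<in>{1..a}. G (z j)) + real (l - a) * G (z (a + 1))"
  define Max where "Max = {S\<in>subsets_of_card {1..m} l. {1..a} \<subseteq> S \<and> S \<subseteq> {1..a} \<union> {a+1..b}}"
  have Max_eq: "{S\<in>subsets_of_card {1..m} l. (\<Sum>j\<in>S. G (z j)) = M} = Max"
    using sum_le_K_group_level(2)[OF ordered Kgroup l] unfolding M_def Max_def by blast
  have "{1..l} \<in> Max" using la ab unfolding Max_def subsets_of_card_def by auto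
  then have attained: "{S\<in>subsets_of_card {1..m} l. (\<Sum>j\<in>S. G (z j)) = M} \<noteq> {}"
    unfolding Max_eq by blast
  have le: "\<forall>S\<in>subsets_of_card {1..m} l. (\<Sum>j\<in>S. G (z j)) \<le> M"
    using sum_le_K_group_level(1)[OF ordered Kgroup l] unfolding M_def by blast
  have "0 < l" "l \<le> m" using la ab by simp_all
  from tendsto_verb_disc_sigma_w[OF distinct pos this le attained]
  have "((\<lambda>t. verb_disc z (sigma_w G z \<mu> m t) {1..m} (l - 1)) \<longlongrightarrow> - cnj (heine_mean z \<mu> Max)) at_top"
    unfolding Max_eq .
  also have "- cnj (heine_mean z \<mu> Max) =
      (-1) ^ a * cnj (\<Prod>p\<in>{1..a}. z p) * verb_disc z (muK_w z \<mu> a b) {a+1..b} (l - a - 1)"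
    unfolding Max_def heine_mean_prefix_union[OF inj_b pos_b ab(1) \<open>{1..b} \<subseteq> {1..m}\<close> less_imp_le[OF la(1)]]
      verb_disc_muK_w[OF inj_b pos_b la]
    by (simp add: prod_uminus)
  finally show ?thesis .
qed

end
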